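(* Let $d\in\{2,3\}$, let $L,M,N$ be positive integers, $K:=dM+LN$. Let $\mathbf{A}\in\mathbb{R}^{dM\times dM}$, $\mathbf{C}\in\mathbb{R}^{LN\times LN}$ be symmetric positive definite, $\mathbf{B}\in\mathbb{R}^{dM\times LN}$ such that $\mathbf{E}=\begin{pmatrix}\mathbf{A}&\mathbf{B}\\ \mathbf{B}^\top&\mathbf{C}\end{pmatrix}$ is positive definite, $\mathbf{D}=\operatorname{diag}(D_1\mathbf{I}_{L\times L},\dots,D_N\mathbf{I}_{L\times L})$ with $D_i>0$, and $\mathbf{l}\in\mathbb{R}^{dM}$. Let $\mathbf{S}_i:\mathbb{R}^L\times\mathbb{R}^L\to\mathbb{R}^L$ ($i=1,\dots,N$) be semismooth, and define $\mathbf{F}(\mathbf{a},\mathbf{b},\mathbf{c})=(\mathbf{A}\mathbf{a}+\mathbf{B}\mathbf{b}+\mathbf{l},\ \mathbf{B}^\top\mathbf{a}+\mathbf{C}\mathbf{b}+\mathbf{D}\mathbf{c},\ \mathbf{S}_1(\mathbf{b}_1,\mathbf{c}_1),\dots,\mathbf{S}_N(\mathbf{b}_N,\mathbf{c}_N))$, where $\mathbf{b}_i=(b_{L(i-1)+1},\dots,b_{Li})^\top$ and $\mathbf{c}_i$ analogously. Let $(\mathbf{a}^*,\mathbf{b}^*,\mathbf{c}^* )$ be a solution of $\mathbf{F}(\mathbf{a}^*,\mathbf{b}^*,\mathbf{c}^* )=\mathbf{0}$, and let $\mathbf{H}\in\partial\mathbf{F}(\mathbf{a}^*,\mathbf{b}^*,\mathbf{c}^*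 )$, which has the form $\mathbf{H}=\begin{pmatrix}\mathbf{A}&\mathbf{B}&\mathbf{0}\\ \mathbf{B}^\top&\mathbf{C}&\mathbf{D}\\ \mathbf{0}&\mathbf{X}&\mathbf{Y}\end{pmatrix}$ with $\mathbf{X}=\operatorname{diag}(\mathbf{X}_1,\dots,\mathbf{X}_N)$, $\mathbf{Y}=\operatorname{diag}(\mathbf{Y}_1,\dots,\mathbf{Y}_N)$, $\mathbf{X}_i,\mathbf{Y}_i\in\mathbb{R}^{L\times L}$. Suppose the pair $(\mathbf{X}_i,\mathbf{Y}_i)$ is eigencomplementary for every $i\in\{1,\dots,N\}$. Then the Schur complement $\mathbf{S}_{\mathbf{H}}:=\mathbf{Y}-\mathbf{X}\mathbf{S}_{\mathbf{E}}^{-1}\mathbf{D}$ of $\mathbf{H}$ with respect to $\mathbf{E}$, where $\mathbf{S}_{\mathbf{E}}:=\mathbf{C}-\mathbf{B}^\top\mathbf{A}^{-1}\mathbf{B}$, is regular (invertible).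
   Context: Semismoothness is in the sense of Qi and Sun (1993). $\partial\mathbf{F}(\mathbf{x})$ denotes the Clarke subdifferential: the convex hull of all limits $\lim_n\nabla\mathbf{F}(\mathbf{x}_n)$ with $\mathbf{x}_n\to\mathbf{x}$ and $\mathbf{F}$ differentiable at each $\mathbf{x}_n$. A pair $(\mathbf{F},\mathbf{G})$ of real symmetric $L\times L$ matrices is called eigencomplementary if $\mathbf{F}$ is negative semi-definite, $\mathbf{G}$ is positive semi-definite, they have a common basis of eigenvectors of $\mathbb{R}^L$, and, if both are singular, additionally $\bigoplus_{\xi\in\sigma(\mathbf{F}),\,\xi<0}\operatorname{Eig}_{\mathbf{F}}(\xi)=\operatorname{Eig}_{\mathbf{G}}(0)$ ($\sigma$ = spectrum, $\operatorname{Eig}$ = eigenspace). *)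

theory Defs
  imports Complex_Main "Jordan_Normal_Form.Determinant"
begin

(* Vectors of R^n are JNF vectors in carrier_vec n, matrices R^{m x n} are in carrier_mat m n. *)

definition vnorm :: "real vec \<Rightarrow> real" where
  "vnorm v = sqrt (\<Sum>i<dim_vec v. (v $ i)^2)"

definition vec_block :: "real vec \<Rightarrow> nat \<Rightarrow> nat \<Rightarrow> real vec" where
  "vec_block v off len = vec len (\<lambda>j. v $ (off + j))"

definition has_jac :: "nat \<Rightarrow> nat \<Rightarrow> (real vec \<Rightarrow> real vec) \<Rightarrow> real mat \<Rightarrow> real vec \<Rightarrow> bool" where
  "has_jac n m F J x \<longleftrightarrow> J \<in> carrier_mat m n \<and>
     (\<forall>e>0. \<exists>\<delta>>0. \<forall>y\<in>carrier_vec n. vnorm (y - x) < \<delta> \<longrightarrow>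
        vnorm (F y - F x - J *\<^sub>v (y - x)) \<le> e * vnorm (y - x))"

definition jac_limits :: "nat \<Rightarrow> nat \<Rightarrow> (real vec \<Rightarrow> real vec) \<Rightarrow> real vec \<Rightarrow> real mat set" where
  "jac_limits n m F x = {J \<in> carrier_mat m n. \<exists>xs Js.
      (\<forall>k. xs k \<in> carrier_vec n \<and> has_jac n m F (Js k) (xs k)) \<and>
      (\<lambda>k. vnorm (xs k - x)) \<longlonglongrightarrow> 0 \<and>
      (\<forall>r<m. \<forall>c<n. (\<lambda>k. Js k $$ (r, c)) \<longlonglongrightarrow> J $$ (r, c))}"

definition clarke :: "nat \<Rightarrow> nat \<Rightarrow> (real vec \<Rightarrow> real vec) \<Rightarrow> real vec \<Rightarrow> real mat set" where
  "clarke n m F x = {H \<in> carrier_mat m n. \<exists>k (w :: nat \<Rightarrow> real) Ms.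
      (\<forall>j<k. w j \<ge> 0 \<and> Ms j \<in> jac_limits n m F x) \<and> (\<Sum>j<k. w j) = 1 \<and>
      (\<forall>r<m. \<forall>c<n. H $$ (r, c) = (\<Sum>j<k. w j * Ms j $$ (r, c)))}"

(* semismoothness at x in the sense of Qi and Sun (1993) *)
definition semismooth_at :: "nat \<Rightarrow> nat \<Rightarrow> (real vec \<Rightarrow> real vec) \<Rightarrow> real vec \<Rightarrow> bool" where
  "semismooth_at n m F x \<longleftrightarrow>
     (\<exists>r>0. \<exists>Lc. \<forall>y\<in>carrier_vec n. \<forall>z\<in>carrier_vec n.
        vnorm (y - x) < r \<longrightarrow> vnorm (z - x) < r \<longrightarrow> vnorm (F y - F z) \<le> Lc * vnorm (y - z)) \<and>
     (\<forall>h\<in>carrier_vec n. \<exists>lim\<in>carrier_vec m. \<forall>e>0. \<exists>\<delta>>0.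
        \<forall>h'\<in>carrier_vec n. \<forall>t V. vnorm (h' - h) < \<delta> \<and> 0 < t \<and> t < \<delta> \<and>
          V \<in> clarke n m F (x + t \<cdot>\<^sub>v h') \<longrightarrow> vnorm (V *\<^sub>v h' - lim) < e)"

definition semismooth :: "nat \<Rightarrow> nat \<Rightarrow> (real vec \<Rightarrow> real vec) \<Rightarrow> bool" where
  "semismooth n m F \<longleftrightarrow> (\<forall>x\<in>carrier_vec n. F x \<in> carrier_vec m) \<and>
     (\<forall>x\<in>carrier_vec n. semismooth_at n m F x)"

definition sym_pos_def :: "nat \<Rightarrow> real mat \<Rightarrow> bool" where
  "sym_pos_def n A \<longleftrightarrow> A \<in> carrier_mat n n \<and> transpose_mat A = A \<and>
     (\<forall>v\<in>carrier_vec n. v \<noteq> 0\<^sub>v n \<longrightarrow> v \<bullet> (A *\<^sub>v v) > 0)"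

definition neg_semidef :: "nat \<Rightarrow> real mat \<Rightarrow> bool" where
  "neg_semidef n A \<longleftrightarrow> A \<in> carrier_mat n n \<and> transpose_mat A = A \<and>
     (\<forall>v\<in>carrier_vec n. v \<bullet> (A *\<^sub>v v) \<le> 0)"

definition pos_semidef :: "nat \<Rightarrow> real mat \<Rightarrow> bool" where
  "pos_semidef n A \<longleftrightarrow> A \<in> carrier_mat n n \<and> transpose_mat A = A \<and>
     (\<forall>v\<in>carrier_vec n. v \<bullet> (A *\<^sub>v v) \<ge> 0)"

definition eig_space :: "nat \<Rightarrow> real mat \<Rightarrow> real \<Rightarrow> real vec set" where
  "eig_space n A \<xi> = {v \<in> carrier_vec n. A *\<^sub>v v = \<xi> \<cdot>\<^sub>v v}"

definition neg_eig_sum :: "nat \<Rightarrow> real mat \<Rightarrow> real vec set" where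
  "neg_eig_sum n A = {v \<in> carrier_vec n. \<exists>(k::nat) \<xi> w.
      (\<forall>j<k. \<xi> j < 0 \<and> w j \<in> eig_space n A (\<xi> j)) \<and>
      (\<forall>r<n. v $ r = (\<Sum>j<k. w j $ r))}"

definition eigencomplementary :: "nat \<Rightarrow> real mat \<Rightarrow> real mat \<Rightarrow> bool" where
  "eigencomplementary n F G \<longleftrightarrow> neg_semidef n F \<and> pos_semidef n G \<and>
     (\<exists>vs. (\<forall>j<n. vs j \<in> carrier_vec n \<and> (\<exists>\<kappa>. F *\<^sub>v vs j = \<kappa> \<cdot>\<^sub>v vs j) \<and>
                   (\<exists>\<mu>. G *\<^sub>v vs j = \<mu> \<cdot>\<^sub>v vs j)) \<and>
           invertible_mat (mat_of_cols n (map vs [0..<n]))) \<and>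
     (det F = 0 \<and> det G = 0 \<longrightarrow> neg_eig_sum n F = eig_space n G 0)"

definition blockdiag :: "nat \<Rightarrow> nat \<Rightarrow> (nat \<Rightarrow> real mat) \<Rightarrow> real mat" where
  "blockdiag L N Xs = mat (L * N) (L * N)
     (\<lambda>(r, c). if r div L = c div L then Xs (r div L) $$ (r mod L, c mod L) else 0)"

definition minv :: "real mat \<Rightarrow> real mat" where
  "minv A = (SOME B. inverts_mat A B \<and> inverts_mat B A)"

(* F(a,b,c) with m = dM; blocks indexed 0..N-1 *)
definition Ffun :: "nat \<Rightarrow> nat \<Rightarrow> nat \<Rightarrow> real mat \<Rightarrow> real mat \<Rightarrow> real mat \<Rightarrow> real mat \<Rightarrow> real vec
    \<Rightarrow> (nat \<Rightarrow> real vec \<Rightarrow> real vec \<Rightarrow> real vec) \<Rightarrow> real vec \<Rightarrow> real vec" where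
  "Ffun m L N A B C D l S v =
     (let a = vec_block v 0 m; b = vec_block v m (L * N); c = vec_block v (m + L * N) (L * N) in
      (A *\<^sub>v a + B *\<^sub>v b + l) @\<^sub>v (transpose_mat B *\<^sub>v a + C *\<^sub>v b + D *\<^sub>v c) @\<^sub>v
      vec (L * N) (\<lambda>k. S (k div L) (vec_block b (L * (k div L)) L) (vec_block c (L * (k div L)) L) $ (k mod L)))"

end

theory Submission
  imports Defs
begin

(*
  Suppose (Y - X S_E^-1 D) z = 0 and put w = S_E^-1 D z, so that Y_i z_i = X_i w_i on every
  block. Split z_i along the joint eigenspaces of the eigencomplementary pair (X_i, Y_i); these
  are mutually orthogonal, X_i acts on them by some kappa <= 0 and Y_i by some mu >= 0, and
  kappa = mu = 0 only on the zero space. Comparing mu |u|^2 = kappa (w_i . u) on each component u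
  gives z_i . w_i <= 0, hence (D z) . S_E^-1 (D z) = sum_i D_i (z_i . w_i) <= 0. But S_E is the
  Schur complement of the positive definite matrix E, so S_E and S_E^-1 are positive definite;
  thus D z = 0 and z = 0.
*)

lemma mult_mat_vec_nth:
  assumes "A \<in> carrier_mat n k" and "v \<in> carrier_vec k" and "i < n"
  shows "(A *\<^sub>v v) $ i = (\<Sum>j<k. A $$ (i, j) * v $ j)"
  using assms by (auto simp: scalar_prod_def atLeast0LessThan intro!: sum.cong)

lemma scalar_prod_sum_left:
  fixes y :: "'a :: comm_semiring_0 vec"
  assumes y: "y \<in> carrier_vec n" and v: "\<And>r. r < n \<Longrightarrow> v $ r = (\<Sum>p\<in>P. u p $ r)"
  shows "v \<bullet> y = (\<Sum>p\<in>P. u p \<bullet> y)"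
proof -
  have "v \<bullet> y = (\<Sum>r<n. \<Sum>p\<in>P. u p $ r * y $ r)"
    using assms by (simp add: scalar_prod_def atLeast0LessThan sum_distrib_right)
  also have "\<dots> = (\<Sum>p\<in>P. u p \<bullet> y)"
    using y by (subst sum.swap) (simp add: scalar_prod_def atLeast0LessThan)
  finally show ?thesis .
qed

lemma invertible_mat_if_kernel_trivial:
  assumes A: "(A :: 'a :: field mat) \<in> carrier_mat n n"
    and ker: "\<And>v. v \<in> carrier_vec n \<Longrightarrow> A *\<^sub>v v = 0\<^sub>v n \<Longrightarrow> v = 0\<^sub>v n"
  shows "invertible_mat A"
proof -
  have "det A \<noteq> 0"
    using det_0_iff_vec_prod_zero_field[OF A] ker by blast
  from det_non_zero_imp_unit[OF A this, of undefined]
  obtain B where "B \<in> carrier_mat n n" "B * A = 1\<^sub>m n" "A * B = 1\<^sub>m n"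
    unfolding Units_def ring_mat_def by auto
  with A show ?thesis
    unfolding invertible_mat_def inverts_mat_def by auto
qed

lemma invertible_mat_if_pos_form:
  assumes A: "(A :: 'a :: linordered_field mat) \<in> carrier_mat n n"
    and pos: "\<And>v. v \<in> carrier_vec n \<Longrightarrow> v \<noteq> 0\<^sub>v n \<Longrightarrow> v \<bullet> (A *\<^sub>v v) > 0"
  shows "invertible_mat A"
  using A
proof (rule invertible_mat_if_kernel_trivial)
  fix v assume "v \<in> carrier_vec n" "A *\<^sub>v v = 0\<^sub>v n"
  with pos[of v] show "v = 0\<^sub>v n" by fastforce
qed

lemma minv_mat:
  assumes A: "A \<in> carrier_mat n n" and inv: "invertible_mat A"
  shows "minv A \<in> carrier_mat n n" and "A * minv A = 1\<^sub>m n" and "minv A * A = 1\<^sub>m n"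
proof -
  have "\<exists>B. inverts_mat A B \<and> inverts_mat B A"
    using inv unfolding invertible_mat_def by auto
  hence "inverts_mat A (minv A) \<and> inverts_mat (minv A) A"
    unfolding minv_def by (rule someI_ex)
  hence AB: "A * minv A = 1\<^sub>m n" and BA: "minv A * A = 1\<^sub>m (dim_row (minv A))"
    using A unfolding inverts_mat_def by auto
  have "dim_col (minv A) = n" using arg_cong[OF AB, of dim_col] by simp
  moreover have "dim_row (minv A) = n" using arg_cong[OF BA, of dim_col] A by simp
  ultimately show "minv A \<in> carrier_mat n n" and "A * minv A = 1\<^sub>m n" and "minv A * A = 1\<^sub>m n"
    using AB BA by auto
qed

lemma minv_pos_form:
  assumes S: "S \<in> carrier_mat n n"
    and pos: "\<And>v. v \<in> carrier_vec n \<Longrightarrow> v \<noteq> 0\<^sub>v n \<Longrightarrow> v \<bullet> (S *\<^sub>v v) > 0"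
    and v: "v \<in> carrier_vec n" "v \<noteq> 0\<^sub>v n"
  shows "v \<bullet> (minv S *\<^sub>v v) > 0"
proof -
  note Si = minv_mat[OF S invertible_mat_if_pos_form[OF S pos]]
  define y where "y = minv S *\<^sub>v v"
  have y: "y \<in> carrier_vec n" using Si(1) v unfolding y_def by auto
  have Sy: "S *\<^sub>v y = v"
    unfolding y_def using S Si v by (metis assoc_mult_mat_vec one_mult_mat_vec)
  with S v have "y \<noteq> 0\<^sub>v n" by auto
  with pos y have "y \<bullet> (S *\<^sub>v y) > 0" by blast
  moreover have "v \<bullet> y = y \<bullet> (S *\<^sub>v y)"
    using Sy comm_scalar_prod[OF y v(1)] by simp
  ultimately show ?thesis unfolding y_def by simp
qed

lemma four_block_mat_mult_schur_vec:
  assumes A: "A \<in> carrier_mat m m" "invertible_mat A"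
    and B: "B \<in> carrier_mat m k" and C: "C \<in> carrier_mat k k" and v: "v \<in> carrier_vec k"
  shows "four_block_mat A B (transpose_mat B) C *\<^sub>v (- (minv A * B) *\<^sub>v v @\<^sub>v v)
    = 0\<^sub>v m @\<^sub>v (C - transpose_mat B * minv A * B) *\<^sub>v v"
proof -
  note Ai = minv_mat[OF A]
  have Bt: "transpose_mat B \<in> carrier_mat k m" using B by auto
  define K where "K = minv A * B"
  have K: "K \<in> carrier_mat m k" and mK: "- K \<in> carrier_mat m k"
    unfolding K_def using Ai(1) B by auto
  have mKv: "- K *\<^sub>v v \<in> carrier_vec m" using mK v by auto
  have AK: "A * K = B"
    unfolding K_def using A Ai B by (simp add: assoc_mult_mat[symmetric, of A m m _ m B k])
  have BtK: "transpose_mat B * K = transpose_mat B * minv A * B"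
    unfolding K_def using Bt Ai(1) B by (simp add: assoc_mult_mat[of _ k m _ m _ k])
  have "A *\<^sub>v (- K *\<^sub>v v) = - (B *\<^sub>v v)"
    unfolding assoc_mult_mat_vec[OF A(1) mK v, symmetric] using AK A K B v by simp
  then have top: "A *\<^sub>v (- K *\<^sub>v v) + B *\<^sub>v v = 0\<^sub>v m"
    using B v by auto
  have "transpose_mat B *\<^sub>v (- K *\<^sub>v v) = - ((transpose_mat B * minv A * B) *\<^sub>v v)"
    unfolding assoc_mult_mat_vec[OF Bt mK v, symmetric] BtK[symmetric] using Bt K v by simp
  moreover have "(C - transpose_mat B * minv A * B) *\<^sub>v v
      = C *\<^sub>v v - (transpose_mat B * minv A * B) *\<^sub>v v"
    using Bt Ai(1) B C v by (intro minus_mult_distrib_mat_vec) auto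
  ultimately have bottom: "transpose_mat B *\<^sub>v (- K *\<^sub>v v) + C *\<^sub>v v
      = (C - transpose_mat B * minv A * B) *\<^sub>v v"
    using Bt Ai(1) B C v by (intro eq_vecI) auto
  show ?thesis
    unfolding K_def[symmetric] four_block_mat_mult_vec[OF A(1) B Bt C mKv v] top bottom ..
qed

lemma schur_complement_pos_form:
  assumes A: "sym_pos_def m A" and B: "B \<in> carrier_mat m k" and C: "C \<in> carrier_mat k k"
    and E: "sym_pos_def (m + k) (four_block_mat A B (transpose_mat B) C)"
    and v: "v \<in> carrier_vec k" "v \<noteq> 0\<^sub>v k"
  shows "v \<bullet> ((C - transpose_mat B * minv A * B) *\<^sub>v v) > 0"
proof -
  have Ac: "A \<in> carrier_mat m m"
    and Apos: "\<And>u. u \<in> carrier_vec m \<Longrightarrow> u \<noteq> 0\<^sub>v m \<Longrightarrow> u \<bullet> (A *\<^sub>v u) > 0"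
    using A unfolding sym_pos_def_def by auto
  have Ainv: "invertible_mat A" by (rule invertible_mat_if_pos_form[OF Ac Apos])
  define a where "a = - (minv A * B) *\<^sub>v v"
  have a: "a \<in> carrier_vec m"
    unfolding a_def using minv_mat(1)[OF Ac Ainv] B v by auto
  have SE: "C - transpose_mat B * minv A * B \<in> carrier_mat k k"
    using B C by auto
  have x: "a @\<^sub>v v \<in> carrier_vec (m + k)" using a v by auto
  have "a @\<^sub>v v \<noteq> 0\<^sub>v (m + k)"
  proof
    assume "a @\<^sub>v v = 0\<^sub>v (m + k)"
    also have "\<dots> = 0\<^sub>v m @\<^sub>v 0\<^sub>v k" by auto
    finally show False using a v by simp
  qed
  with E x have "0 < (a @\<^sub>v v) \<bullet> (four_block_mat A B (transpose_mat B) C *\<^sub>v (a @\<^sub>v v))"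
    unfolding sym_pos_def_def by blast
  also have "\<dots> = (a @\<^sub>v v) \<bullet> (0\<^sub>v m @\<^sub>v (C - transpose_mat B * minv A * B) *\<^sub>v v)"
    unfolding a_def four_block_mat_mult_schur_vec[OF Ac Ainv B C v(1)] ..
  also have "\<dots> = a \<bullet> 0\<^sub>v m + v \<bullet> ((C - transpose_mat B * minv A * B) *\<^sub>v v)"
    using a v SE by (intro scalar_prod_append) auto
  finally show ?thesis using a by simp
qed

lemma sum_lessThan_mult_blocks:
  "(\<Sum>r<L * N. f r) = (\<Sum>i<N. \<Sum>k<L. f (L * i + k :: nat))"
proof -
  have "(\<Sum>r<L * N. f r) = (\<Sum>i<N. sum f {i * L..<i * L + L})"
    by (simp add: sum.nat_group mult.commute)
  also have "\<dots> = (\<Sum>i<N. \<Sum>k<L. f (L * i + k))"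
    by (simp add: sum.shift_bounds_nat_ivl[where m=0, simplified] lessThan_atLeast0 mult.commute add.commute)
  finally show ?thesis .
qed

lemma block_index_less:
  assumes "i < N" and "k < L"
  shows "L * i + k < L * (N :: nat)"
proof -
  have "L * i + k < L * (i + 1)" using assms(2) by simp
  also have "\<dots> \<le> L * N" using assms(1) by (intro mult_le_mono2) simp
  finally show ?thesis .
qed

lemma blockdiag_carrier: "blockdiag L N Xs \<in> carrier_mat (L * N) (L * N)"
  unfolding blockdiag_def by simp

lemma blockdiag_index:
  assumes "i < N" and "i' < N" and "k < L" and "k' < L"
  shows "blockdiag L N Xs $$ (L * i + k, L * i' + k') = (if i = i' then Xs i $$ (k, k') else 0)"
  using assms block_index_less[OF assms(1,3)] block_index_less[OF assms(2,4)]
  unfolding blockdiag_def by auto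

lemma blockdiag_mult_vec_nth:
  assumes i: "i < N" and k: "k < L" and z: "z \<in> carrier_vec (L * N)"
  shows "(blockdiag L N Xs *\<^sub>v z) $ (L * i + k) = (\<Sum>k'<L. Xs i $$ (k, k') * z $ (L * i + k'))"
proof -
  have "(blockdiag L N Xs *\<^sub>v z) $ (L * i + k)
      = (\<Sum>i'<N. \<Sum>k'<L. blockdiag L N Xs $$ (L * i + k, L * i' + k') * z $ (L * i' + k'))"
    using mult_mat_vec_nth[OF blockdiag_carrier z block_index_less[OF i k]]
    by (simp add: sum_lessThan_mult_blocks)
  also have "\<dots> = (\<Sum>i'<N. if i' = i then \<Sum>k'<L. Xs i $$ (k, k') * z $ (L * i + k') else 0)"
    using i k by (intro sum.cong refl) (auto simp: blockdiag_index)
  also have "\<dots> = (\<Sum>k'<L. Xs i $$ (k, k') * z $ (L * i + k'))"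
    using i by simp
  finally show ?thesis .
qed

lemma vec_block_blockdiag_mult_vec:
  assumes i: "i < N" and X: "Xs i \<in> carrier_mat L L" and z: "z \<in> carrier_vec (L * N)"
  shows "vec_block (blockdiag L N Xs *\<^sub>v z) (L * i) L = Xs i *\<^sub>v vec_block z (L * i) L"
proof (rule eq_vecI)
  fix k assume "k < dim_vec (Xs i *\<^sub>v vec_block z (L * i) L)"
  hence k: "k < L" using X by simp
  have "vec_block z (L * i) L \<in> carrier_vec L" unfolding vec_block_def by simp
  then show "vec_block (blockdiag L N Xs *\<^sub>v z) (L * i) L $ k = (Xs i *\<^sub>v vec_block z (L * i) L) $ k"
    using mult_mat_vec_nth[OF X _ k] blockdiag_mult_vec_nth[OF i k z]
    by (simp add: vec_block_def k)
qed (use X in \<open>simp add: vec_block_def\<close>)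

lemma scalar_prod_vec_blocks:
  assumes "w \<in> carrier_vec (L * N)"
  shows "z \<bullet> w = (\<Sum>i<N. vec_block z (L * i) L \<bullet> vec_block w (L * i) L)"
  using assms unfolding scalar_prod_def vec_block_def
  by (simp add: atLeast0LessThan sum_lessThan_mult_blocks)

lemma blockdiag_scalar_mult_vec_nth:
  assumes r: "r < L * N" and z: "z \<in> carrier_vec (L * N)"
  shows "(blockdiag L N (\<lambda>i. c i \<cdot>\<^sub>m 1\<^sub>m L) *\<^sub>v z) $ r = c (r div L) * z $ r"
proof -
  have L: "L > 0" using r by (cases L) auto
  define i k where "i = r div L" and "k = r mod L"
  have r_eq: "r = L * i + k" and k: "k < L" and i: "i < N"
    unfolding i_def k_def using L r by (auto simp: less_mult_imp_div_less mult.commute)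
  have "(blockdiag L N (\<lambda>i. c i \<cdot>\<^sub>m 1\<^sub>m L) *\<^sub>v z) $ r
      = (\<Sum>k'<L. (c i \<cdot>\<^sub>m 1\<^sub>m L) $$ (k, k') * z $ (L * i + k'))"
    unfolding r_eq by (rule blockdiag_mult_vec_nth[OF i k z])
  also have "\<dots> = (\<Sum>k'<L. if k' = k then c i * z $ (L * i + k') else 0)"
    using k by (intro sum.cong refl) auto
  also have "\<dots> = c (r div L) * z $ r"
    using k r_eq i_def by simp
  finally show ?thesis .
qed

lemma sym_mat_scalar_prod_swap:
  assumes A: "(A :: 'a :: comm_semiring_0 mat) \<in> carrier_mat n n" "transpose_mat A = A"
    and x: "x \<in> carrier_vec n" and y: "y \<in> carrier_vec n"
  shows "(A *\<^sub>v x) \<bullet> y = x \<bullet> (A *\<^sub>v y)"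
  using transpose_vec_mult_scalar[OF A(1) y x] A(2) by simp

lemma sym_mat_eigenvectors_orthogonal:
  assumes X: "(X :: 'a :: idom mat) \<in> carrier_mat n n" "transpose_mat X = X"
    and a: "a \<in> carrier_vec n" and b: "b \<in> carrier_vec n"
    and Xa: "X *\<^sub>v a = \<alpha> \<cdot>\<^sub>v a" and Xb: "X *\<^sub>v b = \<beta> \<cdot>\<^sub>v b" and ne: "\<alpha> \<noteq> \<beta>"
  shows "a \<bullet> b = 0"
proof -
  have "\<alpha> * (a \<bullet> b) = (X *\<^sub>v a) \<bullet> b" using Xa a b by simp
  also have "\<dots> = a \<bullet> (X *\<^sub>v b)" by (rule sym_mat_scalar_prod_swap[OF X a b])
  also have "\<dots> = \<beta> * (a \<bullet> b)" using Xb a b by simp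
  finally show ?thesis using ne by simp
qed

lemma eigenvector_lincomb:
  assumes A: "(A :: 'a :: comm_semiring_0 mat) \<in> carrier_mat n n"
    and vs: "\<And>j. j \<in> J \<Longrightarrow> vs j \<in> carrier_vec n \<and> A *\<^sub>v vs j = c \<cdot>\<^sub>v vs j"
  shows "A *\<^sub>v vec n (\<lambda>r. \<Sum>j\<in>J. a j * vs j $ r) = c \<cdot>\<^sub>v vec n (\<lambda>r. \<Sum>j\<in>J. a j * vs j $ r)"
proof (rule eq_vecI)
  fix r assume "r < dim_vec (c \<cdot>\<^sub>v vec n (\<lambda>r. \<Sum>j\<in>J. a j * vs j $ r))"
  hence r: "r < n" by simp
  have "(A *\<^sub>v vec n (\<lambda>r. \<Sum>j\<in>J. a j * vs j $ r)) $ r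
      = (\<Sum>k<n. A $$ (r, k) * (\<Sum>j\<in>J. a j * vs j $ k))"
    by (subst mult_mat_vec_nth[OF A _ r]) auto
  also have "\<dots> = (\<Sum>j\<in>J. a j * (\<Sum>k<n. A $$ (r, k) * vs j $ k))"
    by (simp add: sum_distrib_left sum.swap[of _ "{..<n}"] ac_simps)
  also have "\<dots> = (\<Sum>j\<in>J. a j * (c * vs j $ r))"
    using mult_mat_vec_nth[OF A _ r, symmetric] vs r by (intro sum.cong refl) force
  also have "\<dots> = (c \<cdot>\<^sub>v vec n (\<lambda>r. \<Sum>j\<in>J. a j * vs j $ r)) $ r"
    using r by (simp add: sum_distrib_left ac_simps)
  finally show "(A *\<^sub>v vec n (\<lambda>r. \<Sum>j\<in>J. a j * vs j $ r)) $ r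
      = (c \<cdot>\<^sub>v vec n (\<lambda>r. \<Sum>j\<in>J. a j * vs j $ r)) $ r" .
qed (use A in simp)

lemma basis_coordinates:
  fixes vs :: "nat \<Rightarrow> real vec"
  assumes basis: "invertible_mat (mat_of_cols n (map vs [0..<n]))"
    and vs: "\<And>j. j < n \<Longrightarrow> vs j \<in> carrier_vec n" and z: "z \<in> carrier_vec n"
  obtains u where "\<And>r. r < n \<Longrightarrow> z $ r = (\<Sum>j<n. u j * vs j $ r)"
proof
  define V where "V = mat_of_cols n (map vs [0..<n])"
  have V: "V \<in> carrier_mat n n"
    unfolding V_def using mat_of_cols_carrier(1)[of n "map vs [0..<n]"] by simp
  note Vi = minv_mat[OF V basis[folded V_def]]
  define u where "u = minv V *\<^sub>v z"
  have u: "u \<in> carrier_vec n" unfolding u_def using Vi z by auto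
  have Vu: "V *\<^sub>v u = z"
    unfolding u_def using assoc_mult_mat_vec[OF V Vi(1) z, symmetric] Vi(2) z by simp
  fix r assume r: "r < n"
  have "z $ r = (\<Sum>j<n. V $$ (r, j) * u $ j)"
    unfolding Vu[symmetric] by (rule mult_mat_vec_nth[OF V u r])
  also have "\<dots> = (\<Sum>j<n. u $ j * vs j $ r)"
    unfolding V_def using r vs by (intro sum.cong refl) (simp add: mat_of_cols_index)
  finally show "z $ r = (\<Sum>j<n. u $ j * vs j $ r)" .
qed

lemma eigencomplementary_common_kernel_trivial:
  assumes ec: "eigencomplementary n X Y" and v: "v \<in> carrier_vec n"
    and Xv: "X *\<^sub>v v = 0\<^sub>v n" and Yv: "Y *\<^sub>v v = 0\<^sub>v n"
  shows "v = 0\<^sub>v n"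
proof (cases "det X = 0 \<and> det Y = 0")
  case False
  moreover have "X \<in> carrier_mat n n" and "Y \<in> carrier_mat n n"
    using ec unfolding eigencomplementary_def neg_semidef_def pos_semidef_def by auto
  ultimately show ?thesis
    using det_0_iff_vec_prod_zero Xv Yv v by blast
next
  case True
  have X: "X \<in> carrier_mat n n" "transpose_mat X = X"
    using ec unfolding eigencomplementary_def neg_semidef_def by auto
  from True ec v Yv have "v \<in> neg_eig_sum n X"
    unfolding eigencomplementary_def eig_space_def by auto
  then obtain k :: nat and \<xi> w
    where w: "\<And>j. j < k \<Longrightarrow> \<xi> j < 0 \<and> w j \<in> eig_space n X (\<xi> j)"
      and v_sum: "\<And>r. r < n \<Longrightarrow> v $ r = (\<Sum>j<k. w j $ r)"
    unfolding neg_eig_sum_def by blast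
  have Xv0: "X *\<^sub>v v = 0 \<cdot>\<^sub>v v" using Xv v by auto
  have "w j \<bullet> v = 0" if "j < k" for j
    using w[OF that] sym_mat_eigenvectors_orthogonal[OF X _ v _ Xv0, of "w j" "\<xi> j"]
    unfolding eig_space_def by auto
  then have "v \<bullet> v = 0"
    using scalar_prod_sum_left[OF v v_sum] by simp
  with v show ?thesis
    using conjugate_square_eq_0_vec[OF v] by simp
qed

lemma eigencomplementary_eigencomponent_nonpos:
  assumes ec: "eigencomplementary n X Y"
    and z: "z \<in> carrier_vec n" and w: "w \<in> carrier_vec n" and u: "u \<in> carrier_vec n"
    and eq: "Y *\<^sub>v z = X *\<^sub>v w"
    and Xu: "X *\<^sub>v u = \<kappa> \<cdot>\<^sub>v u" and Yu: "Y *\<^sub>v u = \<mu> \<cdot>\<^sub>v u"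
    and zu: "z \<bullet> u = u \<bullet> u"
  shows "w \<bullet> u \<le> 0"
proof (cases "u = 0\<^sub>v n")
  case True
  then show ?thesis using w by simp
next
  case u0: False
  have X: "X \<in> carrier_mat n n" "transpose_mat X = X" "u \<bullet> (X *\<^sub>v u) \<le> 0"
    and Y: "Y \<in> carrier_mat n n" "transpose_mat Y = Y" "u \<bullet> (Y *\<^sub>v u) \<ge> 0"
    using ec u unfolding eigencomplementary_def neg_semidef_def pos_semidef_def by auto
  have uu: "u \<bullet> u > 0"
    using conjugate_square_greater_0_vec[OF u] u0 by simp
  have \<kappa>: "\<kappa> \<le> 0" and \<mu>: "\<mu> \<ge> 0"
    using X(3) Y(3) uu u unfolding Xu Yu by (auto simp: zero_le_mult_iff mult_le_0_iff)
  have "\<mu> * (u \<bullet> u) = z \<bullet> (Y *\<^sub>v u)"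
    unfolding Yu zu[symmetric] using z u by simp
  also have "\<dots> = (Y *\<^sub>v z) \<bullet> u"
    using sym_mat_scalar_prod_swap[OF Y(1,2) z u] by simp
  also have "\<dots> = w \<bullet> (X *\<^sub>v u)"
    unfolding eq by (rule sym_mat_scalar_prod_swap[OF X(1,2) w u])
  also have "\<dots> = \<kappa> * (w \<bullet> u)"
    unfolding Xu using w u by simp
  finally have key: "\<mu> * (u \<bullet> u) = \<kappa> * (w \<bullet> u)" .
  show ?thesis
  proof (cases "\<kappa> = 0")
    case True
    with key uu have "\<mu> = 0" by simp
    with True Xu Yu u have "X *\<^sub>v u = 0\<^sub>v n" and "Y *\<^sub>v u = 0\<^sub>v n" by auto
    with eigencomplementary_common_kernel_trivial[OF ec u] u0 show ?thesis by blast
  next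
    case False
    have "\<kappa> * (w \<bullet> u) \<ge> 0" using key \<mu> uu by (metis mult_nonneg_nonneg less_imp_le)
    with False \<kappa> show ?thesis by (simp add: zero_le_mult_iff)
  qed
qed

lemma joint_eigen_decomposition:
  fixes vs :: "nat \<Rightarrow> real vec"
  assumes X: "X \<in> carrier_mat n n" "transpose_mat X = X"
    and Y: "Y \<in> carrier_mat n n" "transpose_mat Y = Y"
    and basis: "invertible_mat (mat_of_cols n (map vs [0..<n]))"
    and vs: "\<And>j. j < n \<Longrightarrow> vs j \<in> carrier_vec n"
    and Xvs: "\<And>j. j < n \<Longrightarrow> X *\<^sub>v vs j = \<kappa> j \<cdot>\<^sub>v vs j"
    and Yvs: "\<And>j. j < n \<Longrightarrow> Y *\<^sub>v vs j = \<mu> j \<cdot>\<^sub>v vs j"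
    and z: "z \<in> carrier_vec n"
  obtains P :: "(real \<times> real) set" and zp where "finite P"
    and "\<And>p. zp p \<in> carrier_vec n"
    and "\<And>p. X *\<^sub>v zp p = fst p \<cdot>\<^sub>v zp p" and "\<And>p. Y *\<^sub>v zp p = snd p \<cdot>\<^sub>v zp p"
    and "\<And>p q. p \<noteq> q \<Longrightarrow> zp p \<bullet> zp q = 0"
    and "\<And>r. r < n \<Longrightarrow> z $ r = (\<Sum>p\<in>P. zp p $ r)"
proof -
  obtain u where z_eq: "\<And>r. r < n \<Longrightarrow> z $ r = (\<Sum>j<n. u j * vs j $ r)"
    using basis_coordinates[OF basis vs z] by blast
  \<comment> \<open>The basis need not be orthogonal; grouping it by eigenvalue pairs makes the parts orthogonal.\<close>
  define cls where "cls j = (\<kappa> j, \<mu> j)" for j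
  define zp where "zp p = vec n (\<lambda>r. \<Sum>j\<in>{j. j \<in> {..<n} \<and> cls j = p}. u j * vs j $ r)" for p
  have zp: "zp p \<in> carrier_vec n" for p
    unfolding zp_def by simp
  have Xzp: "X *\<^sub>v zp p = fst p \<cdot>\<^sub>v zp p" for p
    unfolding zp_def by (rule eigenvector_lincomb[OF X(1)]) (auto simp: vs Xvs cls_def)
  have Yzp: "Y *\<^sub>v zp p = snd p \<cdot>\<^sub>v zp p" for p
    unfolding zp_def by (rule eigenvector_lincomb[OF Y(1)]) (auto simp: vs Yvs cls_def)
  have orth: "zp p \<bullet> zp q = 0" if "p \<noteq> q" for p q
  proof (cases "fst p = fst q")
    case False
    then show ?thesis by (rule sym_mat_eigenvectors_orthogonal[OF X zp zp Xzp Xzp])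
  next
    case True
    with that have "snd p \<noteq> snd q" by (simp add: prod_eq_iff)
    then show ?thesis by (rule sym_mat_eigenvectors_orthogonal[OF Y zp zp Yzp Yzp])
  qed
  have "z $ r = (\<Sum>p\<in>cls ` {..<n}. zp p $ r)" if r: "r < n" for r
  proof -
    have "z $ r = (\<Sum>p\<in>cls ` {..<n}. \<Sum>j\<in>{j. j \<in> {..<n} \<and> cls j = p}. u j * vs j $ r)"
      unfolding z_eq[OF r] by (rule sum.group[symmetric]) auto
    then show ?thesis unfolding zp_def using r by simp
  qed
  with that[of "cls ` {..<n}" zp] zp Xzp Yzp orth show ?thesis by blast
qed

lemma eigencomplementary_scalar_prod_nonpos:
  assumes ec: "eigencomplementary n X Y"
    and z: "z \<in> carrier_vec n" and w: "w \<in> carrier_vec n" and eq: "Y *\<^sub>v z = X *\<^sub>v w"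
  shows "z \<bullet> w \<le> 0"
proof -
  have X: "X \<in> carrier_mat n n" "transpose_mat X = X"
    and Y: "Y \<in> carrier_mat n n" "transpose_mat Y = Y"
    using ec unfolding eigencomplementary_def neg_semidef_def pos_semidef_def by auto
  obtain vs where vs: "\<And>j. j < n \<Longrightarrow> vs j \<in> carrier_vec n \<and>
      (\<exists>\<kappa>. X *\<^sub>v vs j = \<kappa> \<cdot>\<^sub>v vs j) \<and> (\<exists>\<mu>. Y *\<^sub>v vs j = \<mu> \<cdot>\<^sub>v vs j)"
    and basis: "invertible_mat (mat_of_cols n (map vs [0..<n]))"
    using ec unfolding eigencomplementary_def by blast
  obtain \<kappa> \<mu> where Xvs: "\<And>j. j < n \<Longrightarrow> X *\<^sub>v vs j = \<kappa> j \<cdot>\<^sub>v vs j"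
    and Yvs: "\<And>j. j < n \<Longrightarrow> Y *\<^sub>v vs j = \<mu> j \<cdot>\<^sub>v vs j"
    using vs by metis
  have vs_carrier: "\<And>j. j < n \<Longrightarrow> vs j \<in> carrier_vec n" using vs by blast
  obtain P zp where P: "finite P" and zp: "\<And>p. zp p \<in> carrier_vec n"
    and Xzp: "\<And>p. X *\<^sub>v zp p = fst p \<cdot>\<^sub>v zp p" and Yzp: "\<And>p. Y *\<^sub>v zp p = snd p \<cdot>\<^sub>v zp p"
    and orth: "\<And>p q. p \<noteq> q \<Longrightarrow> zp p \<bullet> zp q = 0"
    and z_sum: "\<And>r. r < n \<Longrightarrow> z $ r = (\<Sum>p\<in>P. zp p $ r)"
    using joint_eigen_decomposition[OF X Y basis vs_carrier Xvs Yvs z] by blast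
  have "w \<bullet> zp p \<le> 0" if "p \<in> P" for p
  proof (rule eigencomplementary_eigencomponent_nonpos[OF ec z w zp eq Xzp Yzp])
    have "z \<bullet> zp p = (\<Sum>q\<in>P. zp q \<bullet> zp p)"
      by (rule scalar_prod_sum_left[OF zp z_sum])
    also have "\<dots> = (\<Sum>q\<in>P. if q = p then zp p \<bullet> zp p else 0)"
      using orth by (intro sum.cong refl) auto
    finally show "z \<bullet> zp p = zp p \<bullet> zp p"
      using P that by simp
  qed
  moreover have "z \<bullet> w = (\<Sum>p\<in>P. w \<bullet> zp p)"
    using scalar_prod_sum_left[OF w z_sum] comm_scalar_prod[OF zp w] by simp
  ultimately show ?thesis
    by (simp add: sum_nonpos)
qed

lemma vec_block_blockdiag_scalar_mult_vec:
  assumes i: "i < N" and z: "z \<in> carrier_vec (L * N)"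
  shows "vec_block (blockdiag L N (\<lambda>i. c i \<cdot>\<^sub>m 1\<^sub>m L) *\<^sub>v z) (L * i) L = c i \<cdot>\<^sub>v vec_block z (L * i) L"
  using vec_block_blockdiag_mult_vec[OF i _ z, of "\<lambda>i. c i \<cdot>\<^sub>m 1\<^sub>m L"]
  by (auto simp: vec_block_def)

lemma blockdiag_eigencomplementary_weighted_scalar_prod_nonpos:
  assumes ec: "\<And>i. i < N \<Longrightarrow> eigencomplementary L (Xs i) (Ys i)"
    and Dv: "\<And>i. i < N \<Longrightarrow> Dv i > 0"
    and z: "z \<in> carrier_vec (L * N)" and w: "w \<in> carrier_vec (L * N)"
    and eq: "blockdiag L N Ys *\<^sub>v z = blockdiag L N Xs *\<^sub>v w"
  shows "(blockdiag L N (\<lambda>i. Dv i \<cdot>\<^sub>m 1\<^sub>m L) *\<^sub>v z) \<bullet> w \<le> 0"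
proof -
  let ?blk = "\<lambda>v i. vec_block v (L * i) L"
  have "?blk z i \<bullet> ?blk w i \<le> 0" if i: "i < N" for i
  proof (rule eigencomplementary_scalar_prod_nonpos[OF ec[OF i]])
    have "Xs i \<in> carrier_mat L L" "Ys i \<in> carrier_mat L L"
      using ec[OF i] unfolding eigencomplementary_def neg_semidef_def pos_semidef_def by auto
    then show "Ys i *\<^sub>v ?blk z i = Xs i *\<^sub>v ?blk w i"
      using vec_block_blockdiag_mult_vec[OF i _ z] vec_block_blockdiag_mult_vec[OF i _ w] eq
      by metis
  qed (auto simp: vec_block_def)
  then have "Dv i * (?blk z i \<bullet> ?blk w i) \<le> 0" if "i < N" for i
    using Dv[OF that] that by (simp add: mult_nonneg_nonpos)
  moreover have "(blockdiag L N (\<lambda>i. Dv i \<cdot>\<^sub>m 1\<^sub>m L) *\<^sub>v z) \<bullet> w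
      = (\<Sum>i<N. Dv i * (?blk z i \<bullet> ?blk w i))"
  proof -
    have blk: "\<And>v i. ?blk v i \<in> carrier_vec L" by (simp add: vec_block_def)
    show ?thesis
      unfolding scalar_prod_vec_blocks[OF w]
      by (intro sum.cong refl)
        (simp add: vec_block_blockdiag_scalar_mult_vec[OF _ z] smult_scalar_prod_distrib[OF blk blk])
  qed
  ultimately show ?thesis
    by (auto intro!: sum_nonpos)
qed

lemma blockdiag_scalar_mult_vec_eq_0:
  assumes c: "\<And>i. i < N \<Longrightarrow> c i \<noteq> 0" and z: "z \<in> carrier_vec (L * N)"
    and Dz: "blockdiag L N (\<lambda>i. c i \<cdot>\<^sub>m 1\<^sub>m L) *\<^sub>v z = 0\<^sub>v (L * N)"
  shows "z = 0\<^sub>v (L * N)"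
proof (rule eq_vecI)
  fix r assume "r < dim_vec (0\<^sub>v (L * N))"
  then have r: "r < L * N" by simp
  then have "r div L < N" by (simp add: less_mult_imp_div_less mult.commute)
  with c Dz r show "z $ r = 0\<^sub>v (L * N) $ r"
    using blockdiag_scalar_mult_vec_nth[OF r z, of c] by fastforce
qed (use z in simp)

lemma blockdiag_schur_complement_invertible:
  assumes P: "P \<in> carrier_mat (L * N) (L * N)"
    and P_pos: "\<And>v. v \<in> carrier_vec (L * N) \<Longrightarrow> v \<noteq> 0\<^sub>v (L * N) \<Longrightarrow> v \<bullet> (P *\<^sub>v v) > 0"
    and Dv: "\<And>i. i < N \<Longrightarrow> Dv i > 0"
    and ec: "\<And>i. i < N \<Longrightarrow> eigencomplementary L (Xs i) (Ys i)"
  shows "invertible_mat (blockdiag L N Ys - blockdiag L N Xs * P * blockdiag L N (\<lambda>i. Dv i \<cdot>\<^sub>m 1\<^sub>m L))"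
proof (rule invertible_mat_if_kernel_trivial)
  let ?X = "blockdiag L N Xs" and ?Y = "blockdiag L N Ys"
    and ?D = "blockdiag L N (\<lambda>i. Dv i \<cdot>\<^sub>m 1\<^sub>m L)"
  have X: "?X \<in> carrier_mat (L * N) (L * N)" and Y: "?Y \<in> carrier_mat (L * N) (L * N)"
    and D: "?D \<in> carrier_mat (L * N) (L * N)"
    by (rule blockdiag_carrier)+
  then show "?Y - ?X * P * ?D \<in> carrier_mat (L * N) (L * N)"
    using P by auto
  fix z assume z: "z \<in> carrier_vec (L * N)" and Tz: "(?Y - ?X * P * ?D) *\<^sub>v z = 0\<^sub>v (L * N)"
  define w where "w = P *\<^sub>v (?D *\<^sub>v z)"
  have Dz: "?D *\<^sub>v z \<in> carrier_vec (L * N)"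
    using D z by (rule mult_mat_vec_carrier)
  have w: "w \<in> carrier_vec (L * N)"
    unfolding w_def using P Dz by (rule mult_mat_vec_carrier)
  have XPD: "?X * P * ?D \<in> carrier_mat (L * N) (L * N)"
    using X P D by auto
  have "(?X * P * ?D) *\<^sub>v z = (?X * P) *\<^sub>v (?D *\<^sub>v z)"
    using X P D z by (intro assoc_mult_mat_vec) auto
  also have "\<dots> = ?X *\<^sub>v w"
    unfolding w_def using X P Dz by (intro assoc_mult_mat_vec) auto
  finally have diff: "?Y *\<^sub>v z - ?X *\<^sub>v w = 0\<^sub>v (L * N)"
    using minus_mult_distrib_mat_vec[OF Y XPD z] Tz by simp
  have "?Y *\<^sub>v z = ?X *\<^sub>v w"
  proof (rule eq_vecI)
    fix r assume "r < dim_vec (?X *\<^sub>v w)"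
    with X diff show "(?Y *\<^sub>v z) $ r = (?X *\<^sub>v w) $ r"
      by (metis carrier_matD(1) dim_mult_mat_vec index_minus_vec(1) index_zero_vec(1) eq_iff_diff_eq_0)
  qed (use X Y in simp)
  with ec Dv z w have "(?D *\<^sub>v z) \<bullet> w \<le> 0"
    by (intro blockdiag_eigencomplementary_weighted_scalar_prod_nonpos)
  then have "?D *\<^sub>v z = 0\<^sub>v (L * N)"
    using P_pos[OF Dz] unfolding w_def by fastforce
  moreover have "Dv i \<noteq> 0" if "i < N" for i
    using Dv[OF that] by simp
  ultimately show "z = 0\<^sub>v (L * N)"
    using blockdiag_scalar_mult_vec_eq_0[OF _ z] by blast
qed

theorem lemma3p1:
  fixes d L M N :: nat
    and A B C D :: "real mat" and l :: "real vec" and Dv :: "nat \<Rightarrow> real"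
    and S :: "nat \<Rightarrow> real vec \<Rightarrow> real vec \<Rightarrow> real vec"
    and xstar :: "real vec" and H :: "real mat" and Xs Ys :: "nat \<Rightarrow> real mat"
  assumes "d \<in> {2, 3}" and "L > 0" and "M > 0" and "N > 0"
    and "sym_pos_def (d * M) A" and "sym_pos_def (L * N) C"
    and "B \<in> carrier_mat (d * M) (L * N)"
    and "sym_pos_def (d * M + L * N) (four_block_mat A B (transpose_mat B) C)"
    and "\<forall>i<N. Dv i > 0"
    and "D = blockdiag L N (\<lambda>i. Dv i \<cdot>\<^sub>m 1\<^sub>m L)"
    and "l \<in> carrier_vec (d * M)"
    and "\<forall>i<N. semismooth (2 * L) L (\<lambda>v. S i (vec_first v L) (vec_last v L))"
    and "xstar \<in> carrier_vec (d * M + 2 * (L * N))"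
    and "Ffun (d * M) L N A B C D l S xstar = 0\<^sub>v (d * M + 2 * (L * N))"
    and "H \<in> clarke (d * M + 2 * (L * N)) (d * M + 2 * (L * N)) (Ffun (d * M) L N A B C D l S) xstar"
    and "\<forall>i<N. Xs i \<in> carrier_mat L L \<and> Ys i \<in> carrier_mat L L"
    and "H = four_block_mat (four_block_mat A B (transpose_mat B) C)
                            (0\<^sub>m (d * M) (L * N) @\<^sub>r D)
                            (four_block_mat (0\<^sub>m (L * N) (d * M)) (blockdiag L N Xs) (0\<^sub>m 0 (d * M)) (0\<^sub>m 0 (L * N)))
                            (blockdiag L N Ys)"
    and "\<forall>i<N. eigencomplementary L (Xs i) (Ys i)"
  shows "invertible_mat (blockdiag L N Ys - blockdiag L N Xs *
           minv (C - transpose_mat B * minv A * B) * D)"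
proof -
  have C: "C \<in> carrier_mat (L * N) (L * N)"
    using assms(6) unfolding sym_pos_def_def by auto
  define SE where "SE = C - transpose_mat B * minv A * B"
  have SE: "SE \<in> carrier_mat (L * N) (L * N)"
    unfolding SE_def using C assms(7) by auto
  have SE_pos: "v \<bullet> (SE *\<^sub>v v) > 0" if "v \<in> carrier_vec (L * N)" "v \<noteq> 0\<^sub>v (L * N)" for v
    unfolding SE_def using schur_complement_pos_form[OF assms(5,7) C assms(8) that] .
  have P: "minv SE \<in> carrier_mat (L * N) (L * N)"
    using minv_mat(1)[OF SE invertible_mat_if_pos_form[OF SE SE_pos]] .
  show ?thesis
    unfolding assms(10) SE_def[symmetric]
    by (rule blockdiag_schur_complement_invertible[OF P minv_pos_form[OF SE SE_pos]])
      (use assms(9,18) in auto)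
qed

end
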